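(* Let $\theta$ be an infinite cardinal, let $\mathbb{P}$ be a $\theta$-directed poset, and let $\mathbb{P}^\ast$ be a $(<\theta)$-cofinal subposet of $\mathbb{P}$. Let $(I,\le)$ be a partial order and let $\langle p_i : i \in I\rangle$ be a diagram in $\mathbb{P}$ (i.e. $i \le j$ in $I$ implies $p_i \le p_j$). If for all $i \in I$, $|\{j \in I \mid j < i\}| < \theta$, then there exist a cofinal subset $I_0 \subseteq I$ and a diagram $\langle q_i : i \in I_0\rangle$ in $\mathbb{P}^\ast$ (i.e. $i\le j$ in $I_0$ implies $q_i \le^\ast q_j$) such that $p_i \le q_i$ for all $i \in I_0$.
   Context: A poset $\mathbb{P}$ is $\theta$-directed if every subset of cardinality $<\theta$ has an upper bound. A subposet of a poset $(\mathbb{P},\le)$ is a poset $(\mathbb{P}^\ast,\le^\ast)$ with $\mathbb{P}^\ast \subseteq \mathbb{P}$ and $x \le^\ast y$ implying $x \le y$. For a cardinal $\kappa$, $\mathbb{P}^\ast$ is $\kappa$-cofinal in $\mathbb{P}$ if for every $p \in \mathbb{P}$ and every sequence $\langle p_i : i < \kappa\rangle$ of elements of $\mathbb{P}^\ast$ with $p_i \le p$ for all $i$, there is $q \in \mathbb{P}^\ast$ with $p \le q$ and $p_i \le^\ast q$ for all $i<\kappa$. $\mathbb{P}^\ast$ is $(<\theta)$-cofinal if it is $\kappa$-cofinal for every cardinal $\kappa < \theta$. *)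

theory Defs
  imports Main "HOL-Library.Equipollence"
begin

text \<open>Cardinals are represented by sets: the cardinal
theta is the cardinality of a set Theta, and "|S| < theta" is S \<prec> Theta.\<close>

definition poset_on :: "'a set \<Rightarrow> ('a \<Rightarrow> 'a \<Rightarrow> bool) \<Rightarrow> bool" where
  "poset_on A le \<longleftrightarrow>
     (\<forall>x\<in>A. le x x) \<and>
     (\<forall>x\<in>A. \<forall>y\<in>A. le x y \<and> le y x \<longrightarrow> x = y) \<and>
     (\<forall>x\<in>A. \<forall>y\<in>A. \<forall>z\<in>A. le x y \<and> le y z \<longrightarrow> le x z)"

definition directed_card :: "'c set \<Rightarrow> 'a set \<Rightarrow> ('a \<Rightarrow> 'a \<Rightarrow> bool) \<Rightarrow> bool" where
  "directed_card Theta P le \<longleftrightarrow>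
     (\<forall>S. S \<subseteq> P \<and> S \<prec> Theta \<longrightarrow> (\<exists>u\<in>P. \<forall>s\<in>S. le s u))"

definition subposet :: "'a set \<Rightarrow> ('a \<Rightarrow> 'a \<Rightarrow> bool) \<Rightarrow> 'a set \<Rightarrow> ('a \<Rightarrow> 'a \<Rightarrow> bool) \<Rightarrow> bool" where
  "subposet Ps les P le \<longleftrightarrow> poset_on Ps les \<and> Ps \<subseteq> P \<and>
     (\<forall>x\<in>Ps. \<forall>y\<in>Ps. les x y \<longrightarrow> le x y)"

text \<open>kappa-cofinality, with the cardinal kappa represented by an index set K:
sequences are families indexed by K.\<close>
definition kappa_cofinal ::
  "'k set \<Rightarrow> 'a set \<Rightarrow> ('a \<Rightarrow> 'a \<Rightarrow> bool) \<Rightarrow> 'a set \<Rightarrow> ('a \<Rightarrow> 'a \<Rightarrow> bool) \<Rightarrow> bool" where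
  "kappa_cofinal K Ps les P le \<longleftrightarrow>
     (\<forall>p\<in>P. \<forall>f. (\<forall>i\<in>K. f i \<in> Ps \<and> le (f i) p) \<longrightarrow>
        (\<exists>q\<in>Ps. le p q \<and> (\<forall>i\<in>K. les (f i) q)))"

text \<open>(<theta)-cofinal: kappa-cofinal for every cardinal kappa < theta; the cardinals
below theta are exactly the cardinalities of sets K \<subseteq> Theta with K \<prec> Theta.\<close>
definition less_cofinal ::
  "'c set \<Rightarrow> 'a set \<Rightarrow> ('a \<Rightarrow> 'a \<Rightarrow> bool) \<Rightarrow> 'a set \<Rightarrow> ('a \<Rightarrow> 'a \<Rightarrow> bool) \<Rightarrow> bool" where
  "less_cofinal Theta Ps les P le \<longleftrightarrow>
     (\<forall>K. K \<subseteq> Theta \<and> K \<prec> Theta \<longrightarrow> kappa_cofinal K Ps les P le)"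

definition diagram :: "'i set \<Rightarrow> ('i \<Rightarrow> 'i \<Rightarrow> bool) \<Rightarrow> 'a set \<Rightarrow> ('a \<Rightarrow> 'a \<Rightarrow> bool) \<Rightarrow> ('i \<Rightarrow> 'a) \<Rightarrow> bool" where
  "diagram I leI P le p \<longleftrightarrow> (\<forall>i\<in>I. p i \<in> P) \<and>
     (\<forall>i\<in>I. \<forall>j\<in>I. leI i j \<longrightarrow> le (p i) (p j))"

definition cofinal_subset :: "'i set \<Rightarrow> 'i set \<Rightarrow> ('i \<Rightarrow> 'i \<Rightarrow> bool) \<Rightarrow> bool" where
  "cofinal_subset I0 I leI \<longleftrightarrow> I0 \<subseteq> I \<and> (\<forall>i\<in>I. \<exists>j\<in>I0. leI i j)"

end

theory Submission
  imports Defs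
begin

text \<open>Well-order I and keep only the elements that lie above no earlier element: this set
is cofinal, and on it the strict order of I is contained in the well-order. A transfinite
recursion along the well-order then chooses q y in the subposet above p y and above all the
earlier q j with j < y; there are fewer than theta such j, so directedness of P and
(<theta)-cofinality of the subposet provide the bound.\<close>

lemma insert_lesspoll_infinite:
  assumes "A \<prec> T" "infinite T"
  shows "insert x A \<prec> T"
proof (cases "finite A")
  case True
  then show ?thesis using assms finite_lesspoll_infinite by blast
next
  case False
  then have "insert x A \<approx> A" by (rule infinite_insert_eqpoll)
  then show ?thesis using assms eq_lesspoll_trans by blast
qed

lemma less_cofinal_bound_family:
  assumes "less_cofinal Theta Ps les P le" "D \<prec> Theta" "u \<in> P"
    and "\<forall>j\<in>D. g j \<in> Ps \<and> le (g j) u"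
  shows "\<exists>z\<in>Ps. le u z \<and> (\<forall>j\<in>D. les (g j) z)"
proof -
  obtain f where f: "inj_on f D" "f ` D \<subseteq> Theta"
    using \<open>D \<prec> Theta\<close> unfolding lesspoll_def lepoll_def by blast
  have "f ` D \<approx> D" using f(1) by (meson bij_betw_imageI bij_betw_inv_into eqpoll_def)
  then have "f ` D \<prec> Theta" using \<open>D \<prec> Theta\<close> eq_lesspoll_trans by blast
  then have "kappa_cofinal (f ` D) Ps les P le"
    using assms(1) f(2) unfolding less_cofinal_def by blast
  moreover have "\<forall>k\<in>f ` D. g (inv_into D f k) \<in> Ps \<and> le (g (inv_into D f k)) u"
    using assms(4) by (auto simp: inv_into_into)
  ultimately obtain z where "z \<in> Ps" "le u z" "\<forall>k\<in>f ` D. les (g (inv_into D f k)) z"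
    using \<open>u \<in> P\<close> unfolding kappa_cofinal_def
    by (elim ballE[of _ _ u] allE[of _ "\<lambda>k. g (inv_into D f k)"]) blast+
  moreover have "inv_into D f (f j) = j" if "j \<in> D" for j
    using f(1) that by (rule inv_into_f_f)
  ultimately show ?thesis by auto
qed

lemma subposet_upper_bound:
  assumes "infinite Theta"
    and "poset_on P le"
    and "directed_card Theta P le"
    and "subposet Ps les P le"
    and "less_cofinal Theta Ps les P le"
    and "x \<in> P" "D \<prec> Theta" "\<forall>j\<in>D. g j \<in> Ps"
  shows "\<exists>z\<in>Ps. le x z \<and> (\<forall>j\<in>D. les (g j) z)"
proof -
  have "Ps \<subseteq> P" using assms(4) unfolding subposet_def by blast
  have "g ` D \<prec> Theta" using \<open>D \<prec> Theta\<close> image_lepoll lesspoll_trans1 by blast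
  then have "insert x (g ` D) \<prec> Theta" using \<open>infinite Theta\<close> by (rule insert_lesspoll_infinite)
  moreover have "insert x (g ` D) \<subseteq> P" using assms(6,8) \<open>Ps \<subseteq> P\<close> by blast
  ultimately obtain u where u: "u \<in> P" "\<forall>s\<in>insert x (g ` D). le s u"
    using assms(3) unfolding directed_card_def by blast
  moreover have "\<forall>j\<in>D. g j \<in> Ps \<and> le (g j) u" using u(2) assms(8) by blast
  ultimately obtain z where z: "z \<in> Ps" "le u z" "\<forall>j\<in>D. les (g j) z"
    using less_cofinal_bound_family[OF assms(5,7)] by blast
  have "le x z" using assms(2,6) u(1,2) z(1,2) \<open>Ps \<subseteq> P\<close> unfolding poset_on_def by blast
  then show ?thesis using z by blast
qed

lemma cofinal_subset_wf_extension:
  assumes refl: "\<forall>x\<in>I. leI x x"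
    and trans: "\<forall>x\<in>I. \<forall>y\<in>I. \<forall>z\<in>I. leI x y \<and> leI y z \<longrightarrow> leI x z"
  shows "\<exists>I0 R. cofinal_subset I0 I leI \<and> wf R \<and>
           (\<forall>i\<in>I0. \<forall>j\<in>I0. leI i j \<and> i \<noteq> j \<longrightarrow> (i, j) \<in> R)"
proof -
  obtain W where W: "well_order_on I W" using well_order_on by blast
  define R where "R = W - Id"
  have "wf R" using W unfolding R_def well_order_on_def by blast
  have total: "(x, y) \<in> R \<or> (y, x) \<in> R" if "x \<in> I" "y \<in> I" "x \<noteq> y" for x y
    using W that unfolding R_def well_order_on_def linear_order_on_def total_on_def by blast
  define I0 where "I0 = {y\<in>I. \<not> (\<exists>x\<in>I. (x, y) \<in> R \<and> leI y x)}"
  have "\<exists>j\<in>I0. leI i j" if i: "i \<in> I" for i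
  proof -
    have "i \<in> {x\<in>I. leI i x}" using i refl by blast
    from wfE_min[OF \<open>wf R\<close> this] obtain x where x: "x \<in> I" "leI i x"
      and min: "\<And>z. (z, x) \<in> R \<Longrightarrow> z \<notin> {x\<in>I. leI i x}"
      by blast
    have "x \<in> I0" unfolding I0_def
    proof safe
      show "x \<in> I" by fact
      fix z assume "z \<in> I" "(z, x) \<in> R" "leI x z"
      then show False using min[of z] x i trans by blast
    qed
    then show ?thesis using x by blast
  qed
  moreover have "I0 \<subseteq> I" unfolding I0_def by blast
  ultimately have "cofinal_subset I0 I leI" unfolding cofinal_subset_def by blast
  moreover have "(i, j) \<in> R" if "i \<in> I0" "j \<in> I0" "leI i j" "i \<noteq> j" for i j
  proof (rule ccontr)
    assume "(i, j) \<notin> R"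
    with that total[of i j] have "(j, i) \<in> R" unfolding I0_def by blast
    with that show False unfolding I0_def by blast
  qed
  ultimately show ?thesis using \<open>wf R\<close> by (intro exI conjI) blast+
qed

lemma wf_recursive_choice:
  assumes "wf R"
    and D_below: "\<forall>y\<in>Q. \<forall>j\<in>D y. j \<in> Q \<and> (j, y) \<in> R"
    and step: "\<And>y f. y \<in> Q \<Longrightarrow> \<forall>j\<in>D y. f j \<in> A \<Longrightarrow>
                 \<exists>z. z \<in> A \<and> C y z \<and> (\<forall>j\<in>D y. rel (f j) z)"
  shows "\<exists>q. \<forall>y\<in>Q. q y \<in> A \<and> C y (q y) \<and> (\<forall>j\<in>D y. rel (q j) (q y))"
proof -
  define F where "F f y = (SOME z. z \<in> A \<and> C y z \<and> (\<forall>j\<in>D y. rel (f j) z))" for f y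
  define q where "q = wfrec R F"
  have "y \<in> Q \<longrightarrow> q y \<in> A \<and> C y (q y) \<and> (\<forall>j\<in>D y. rel (q j) (q y))" for y
  proof (induction y rule: wf_induct[OF \<open>wf R\<close>])
    case (1 y)
    show ?case
    proof
      assume y: "y \<in> Q"
      have cut_eq: "\<forall>j\<in>D y. cut q R y j = q j" using D_below y by (simp add: cut_apply)
      have "q y = F (cut q R y) y" unfolding q_def by (rule wfrec[OF \<open>wf R\<close>])
      also have "\<dots> = F q y" unfolding F_def using cut_eq by simp
      finally have q_y: "q y = F q y" .
      have "\<forall>j\<in>D y. q j \<in> A" using 1 D_below y by simp
      then have "\<exists>z. z \<in> A \<and> C y z \<and> (\<forall>j\<in>D y. rel (q j) z)" by (rule step[OF y])
      then have "F q y \<in> A \<and> C y (F q y) \<and> (\<forall>j\<in>D y. rel (q j) (F q y))"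
        unfolding F_def by (rule someI_ex)
      then show "q y \<in> A \<and> C y (q y) \<and> (\<forall>j\<in>D y. rel (q j) (q y))"
        unfolding q_y .
    qed
  qed
  then show ?thesis by blast
qed

theorem theorem3p5:
  fixes Theta :: "'c set"
    and P :: "'a set" and le :: "'a \<Rightarrow> 'a \<Rightarrow> bool"
    and Ps :: "'a set" and les :: "'a \<Rightarrow> 'a \<Rightarrow> bool"
    and I :: "'i set" and leI :: "'i \<Rightarrow> 'i \<Rightarrow> bool"
    and p :: "'i \<Rightarrow> 'a"
  assumes "infinite Theta"
    and "poset_on P le"
    and "directed_card Theta P le"
    and "subposet Ps les P le"
    and "less_cofinal Theta Ps les P le"
    and "poset_on I leI"
    and "diagram I leI P le p"
    and "\<forall>i\<in>I. {j\<in>I. leI j i \<and> j \<noteq> i} \<prec> Theta"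
  shows "\<exists>I0 q. cofinal_subset I0 I leI \<and> diagram I0 leI Ps les q \<and>
                (\<forall>i\<in>I0. le (p i) (q i))"
proof -
  have "\<forall>x\<in>I. leI x x" "\<forall>x\<in>I. \<forall>y\<in>I. \<forall>z\<in>I. leI x y \<and> leI y z \<longrightarrow> leI x z"
    using assms(6) unfolding poset_on_def by blast+
  from cofinal_subset_wf_extension[OF this] obtain I0 R where I0: "cofinal_subset I0 I leI"
    and "wf R" and below_R: "\<forall>i\<in>I0. \<forall>j\<in>I0. leI i j \<and> i \<noteq> j \<longrightarrow> (i, j) \<in> R"
    by blast
  have "I0 \<subseteq> I" using I0 unfolding cofinal_subset_def by blast
  define D where "D y = {j\<in>I0. leI j y \<and> j \<noteq> y}" for y
  have "\<exists>q. \<forall>y\<in>I0. q y \<in> Ps \<and> le (p y) (q y) \<and> (\<forall>j\<in>D y. les (q j) (q y))"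
  proof (rule wf_recursive_choice[OF \<open>wf R\<close>])
    show "\<forall>y\<in>I0. \<forall>j\<in>D y. j \<in> I0 \<and> (j, y) \<in> R" using below_R unfolding D_def by blast
    fix y f assume y: "y \<in> I0" and f: "\<forall>j\<in>D y. f j \<in> Ps"
    have "D y \<subseteq> {j\<in>I. leI j y \<and> j \<noteq> y}" unfolding D_def using \<open>I0 \<subseteq> I\<close> by blast
    then have "D y \<prec> Theta"
      using assms(8) y \<open>I0 \<subseteq> I\<close> subset_imp_lepoll lesspoll_trans1 by blast
    moreover have "p y \<in> P" using assms(7) y \<open>I0 \<subseteq> I\<close> unfolding diagram_def by blast
    ultimately show "\<exists>z. z \<in> Ps \<and> le (p y) z \<and> (\<forall>j\<in>D y. les (f j) z)"
      using subposet_upper_bound[OF assms(1-5) _ _ f] by blast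
  qed
  then obtain q where q: "\<forall>y\<in>I0. q y \<in> Ps \<and> le (p y) (q y) \<and> (\<forall>j\<in>D y. les (q j) (q y))"
    by blast
  have "\<forall>x\<in>Ps. les x x" using assms(4) unfolding subposet_def poset_on_def by blast
  then have "diagram I0 leI Ps les q"
    using q unfolding diagram_def D_def by (metis (mono_tags, lifting) mem_Collect_eq)
  then show ?thesis using I0 q by blast
qed

end
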